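(* Let $A,G$ be selfadjoint operators in $\mathcal H$ with $\rho(AG)\neq\emptyset$ and $\rho(GA)\neq\emptyset$, and assume $0\in\sigma_{++}(AG)\cup\sigma_{--}(AG)$. Then $G$ is boundedly invertible.
   Context: $(\mathcal H,(\cdot,\cdot))$ is a complex Hilbert space; $A,G$ possibly unbounded selfadjoint operators; $AG,GA$ operator products with natural domains. $\rho(S)$ is the set of $\lambda$ with $S-\lambda$ injective, surjective with bounded everywhere defined inverse; $S$ boundedly invertible means $0\in\rho(S)$; $\sigma_{ap}(S)$ is the set of $\lambda$ with a sequence $(x_n)\subset\operatorname{dom}S$, $\|x_n\|=1$, $(S-\lambda)x_n\to0$. Fix $\lambda_0\in\mathbb C\setminus\mathbb R$ with $\lambda_0,\overline{\lambda_0}\in\rho(AG)$ (such exists), let $G_0:=G(AG-\lambda_0)^{-1}(AG-\overline{\lambda_0})^{-1}$ (bounded selfadjoint) and $[x,y]:=(G_0x,y)$; $AG$ is symmetric w.r.t. $[\cdot,\cdot]$. $\sigma_{++}(AG)$ ($\sigma_{--}(AG)$) is the set of $\lambda\in\sigma_{ap}(AG)$ such that every $(x_n)\subset\operatorname{dom}(AG)$ with $\|x_n\|=1$, $(AG-\lambda)x_n\to0$ satisfies $\liminf_n[x_n,x_n]>0$ (resp. $\limsup_n[x_n,x_n]<0$); these sets do not depend on $\lambda_0$. *)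

theory Defs
  imports "HOL-Analysis.Analysis"
begin

text \<open>HOL-Analysis has no complex inner product spaces, so we introduce the class of
complex Hilbert spaces: a real Banach space with a complex scalar multiplication
(extending the real one) and a complex inner product (linear in the first argument,
conjugate symmetric) inducing the given norm.\<close>

class complex_hilbert = banach +
  fixes scaleC :: "complex \<Rightarrow> 'a \<Rightarrow> 'a" (infixr \<open>*\<^sub>C\<close> 75)
    and cinner :: "'a \<Rightarrow> 'a \<Rightarrow> complex"
  assumes scaleC_add_right: "a *\<^sub>C (x + y) = a *\<^sub>C x + a *\<^sub>C y"
    and scaleC_add_left: "(a + b) *\<^sub>C x = a *\<^sub>C x + b *\<^sub>C x"
    and scaleC_scaleC: "a *\<^sub>C (b *\<^sub>C x) = (a * b) *\<^sub>C x"
    and scaleC_one: "1 *\<^sub>C x = x"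
    and scaleC_of_real: "complex_of_real r *\<^sub>C x = r *\<^sub>R x"
    and cinner_add_left: "cinner (x + y) z = cinner x z + cinner y z"
    and cinner_scaleC_left: "cinner (a *\<^sub>C x) y = a * cinner x y"
    and cinner_commute: "cinner y x = cnj (cinner x y)"
    and cinner_self_norm: "cinner x x = complex_of_real ((norm x)\<^sup>2)"

type_synonym 'a lop = "'a set \<times> ('a \<Rightarrow> 'a)"

definition opdom :: "'a lop \<Rightarrow> 'a set" where "opdom T = fst T"
definition opfun :: "'a lop \<Rightarrow> 'a \<Rightarrow> 'a" where "opfun T = snd T"

definition csubspace :: "'a::complex_hilbert set \<Rightarrow> bool" where
  "csubspace D \<longleftrightarrow> 0 \<in> D \<and> (\<forall>x\<in>D. \<forall>y\<in>D. x + y \<in> D) \<and> (\<forall>c. \<forall>x\<in>D. c *\<^sub>C x \<in> D)"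

definition linear_op :: "'a::complex_hilbert lop \<Rightarrow> bool" where
  "linear_op T \<longleftrightarrow> csubspace (opdom T) \<and>
     (\<forall>x\<in>opdom T. \<forall>y\<in>opdom T. opfun T (x + y) = opfun T x + opfun T y) \<and>
     (\<forall>c. \<forall>x\<in>opdom T. opfun T (c *\<^sub>C x) = c *\<^sub>C opfun T x)"

text \<open>Selfadjoint: densely defined linear operator with T = T*, i.e. T is symmetric and
every y for which x \<mapsto> (Tx, y) is represented by some z on dom T lies in dom T
(then necessarily T* y = z = T y by density).\<close>
definition selfadjoint :: "'a::complex_hilbert lop \<Rightarrow> bool" where
  "selfadjoint T \<longleftrightarrow> linear_op T \<and> closure (opdom T) = UNIV \<and>
     (\<forall>x\<in>opdom T. \<forall>y\<in>opdom T. cinner (opfun T x) y = cinner x (opfun T y)) \<and>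
     (\<forall>y z. (\<forall>x\<in>opdom T. cinner (opfun T x) y = cinner x z) \<longrightarrow> y \<in> opdom T)"

definition opmult :: "'a lop \<Rightarrow> 'a lop \<Rightarrow> 'a lop" where
  "opmult S T = ({x \<in> opdom T. opfun T x \<in> opdom S}, opfun S \<circ> opfun T)"

definition resolvent_set :: "'a::complex_hilbert lop \<Rightarrow> complex set" where
  "resolvent_set S = {lam.
     inj_on (\<lambda>x. opfun S x - lam *\<^sub>C x) (opdom S) \<and>
     (\<lambda>x. opfun S x - lam *\<^sub>C x) ` opdom S = UNIV \<and>
     (\<exists>C. \<forall>x\<in>opdom S. norm x \<le> C * norm (opfun S x - lam *\<^sub>C x))}"

definition resolvent :: "'a::complex_hilbert lop \<Rightarrow> complex \<Rightarrow> 'a \<Rightarrow> 'a" where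
  "resolvent S \<mu> y = (THE x. x \<in> opdom S \<and> opfun S x - \<mu> *\<^sub>C x = y)"

definition approx_point_spectrum :: "'a::complex_hilbert lop \<Rightarrow> complex set" where
  "approx_point_spectrum S = {lam. \<exists>xs :: nat \<Rightarrow> 'a.
     (\<forall>n. xs n \<in> opdom S \<and> norm (xs n) = 1) \<and>
     (\<lambda>n. opfun S (xs n) - lam *\<^sub>C xs n) \<longlonglongrightarrow> 0}"

definition Gnull :: "'a::complex_hilbert lop \<Rightarrow> 'a lop \<Rightarrow> complex \<Rightarrow> 'a \<Rightarrow> 'a" where
  "Gnull A G lam0 x = opfun G (resolvent (opmult A G) lam0 (resolvent (opmult A G) (cnj lam0) x))"

definition kform :: "'a::complex_hilbert lop \<Rightarrow> 'a lop \<Rightarrow> complex \<Rightarrow> 'a \<Rightarrow> 'a \<Rightarrow> complex" where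
  "kform A G lam0 x y = cinner (Gnull A G lam0 x) y"

definition sigma_pp :: "'a::complex_hilbert lop \<Rightarrow> 'a lop \<Rightarrow> complex \<Rightarrow> complex set" where
  "sigma_pp A G lam0 = {lam \<in> approx_point_spectrum (opmult A G). \<forall>xs :: nat \<Rightarrow> 'a.
     ((\<forall>n. xs n \<in> opdom (opmult A G) \<and> norm (xs n) = 1) \<and>
      (\<lambda>n. opfun (opmult A G) (xs n) - lam *\<^sub>C xs n) \<longlonglongrightarrow> 0) \<longrightarrow>
     liminf (\<lambda>n. ereal (Re (kform A G lam0 (xs n) (xs n)))) > 0}"

definition sigma_mm :: "'a::complex_hilbert lop \<Rightarrow> 'a lop \<Rightarrow> complex \<Rightarrow> complex set" where
  "sigma_mm A G lam0 = {lam \<in> approx_point_spectrum (opmult A G). \<forall>xs :: nat \<Rightarrow> 'a.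
     ((\<forall>n. xs n \<in> opdom (opmult A G) \<and> norm (xs n) = 1) \<and>
      (\<lambda>n. opfun (opmult A G) (xs n) - lam *\<^sub>C xs n) \<longlonglongrightarrow> 0) \<longrightarrow>
     limsup (\<lambda>n. ereal (Re (kform A G lam0 (xs n) (xs n)))) < 0}"

end

theory Submission
  imports Defs
begin

text \<open>
  Suppose \<open>G\<close> is not bounded below, and pick unit vectors \<open>x\<^sub>n\<close> with \<open>G x\<^sub>n \<rightarrow> 0\<close>.
  For \<open>\<mu> \<in> \<rho>(GA)\<close> put \<open>u\<^sub>n = (GA - \<mu>)\<^sup>-\<^sup>1 G x\<^sub>n\<close>; then \<open>u\<^sub>n \<rightarrow> 0\<close> and, since
  \<open>A (GA - \<mu>)\<^sup>-\<^sup>1\<close> is closed and everywhere defined, hence bounded, also \<open>A u\<^sub>n \<rightarrow> 0\<close>.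
  The vectors \<open>y\<^sub>n = A u\<^sub>n - x\<^sub>n\<close> satisfy \<open>\<parallel>y\<^sub>n\<parallel> \<rightarrow> 1\<close>, \<open>G y\<^sub>n = \<mu> u\<^sub>n \<rightarrow> 0\<close> and
  \<open>AG y\<^sub>n = \<mu> A u\<^sub>n \<rightarrow> 0\<close>. After normalisation they form an approximate eigensequence of \<open>AG\<close>
  at \<open>0\<close> along which \<open>[y\<^sub>n, y\<^sub>n] \<rightarrow> 0\<close>, because \<open>\<parallel>G\<^sub>0 y\<parallel> \<le> C \<parallel>G y\<parallel>\<close>; this is
  impossible for a point of \<open>\<sigma>\<^sub>+\<^sub>+(AG) \<union> \<sigma>\<^sub>-\<^sub>-(AG)\<close>. So \<open>G\<close> is bounded below, and a
  selfadjoint operator that is bounded below has closed range with trivial orthogonal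
  complement, i.e. it is boundedly invertible.
\<close>

section \<open>Complex inner product spaces\<close>

lemma cinner_zero_left [simp]: "cinner 0 y = 0"
  using cinner_add_left[of 0 0 y] by simp

lemma cinner_zero_right [simp]: "cinner x 0 = 0"
  using cinner_commute[of 0 x] by simp

lemma cinner_add_right: "cinner x (y + z) = cinner x y + cinner x z"
  using cinner_add_left[of y z x] cinner_commute by (metis complex_cnj_add)

lemma cinner_scaleC_right: "cinner x (a *\<^sub>C y) = cnj a * cinner x y"
  using cinner_scaleC_left[of a y x] cinner_commute by (metis complex_cnj_mult complex_cnj_cnj)

lemma cinner_minus_left: "cinner (- x) y = - cinner x y"
  using cinner_add_left[of x "- x" y] by (simp add: eq_neg_iff_add_eq_0 add.commute)

lemma cinner_diff_left: "cinner (x - y) z = cinner x z - cinner y z"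
  by (simp only: diff_conv_add_uminus cinner_add_left cinner_minus_left)

lemma cinner_minus_right: "cinner x (- y) = - cinner x y"
  using cinner_add_right[of x y "- y"] by (simp add: eq_neg_iff_add_eq_0 add.commute)

lemma cinner_diff_right: "cinner x (y - z) = cinner x y - cinner x z"
  by (simp only: diff_conv_add_uminus cinner_add_right cinner_minus_right)

lemma scaleC_zero_left [simp]: "0 *\<^sub>C x = 0"
  by (metis of_real_0 scaleC_of_real scaleR_zero_left)

lemma scaleC_zero_right [simp]: "a *\<^sub>C 0 = 0"
  using scaleC_add_right[of a 0 0] by simp

lemma scaleC_minus_right: "a *\<^sub>C (- x) = - (a *\<^sub>C x)"
  using scaleC_add_right[of a x "- x"] by (simp add: eq_neg_iff_add_eq_0 add.commute)

lemma scaleC_diff_right: "a *\<^sub>C (x - y) = a *\<^sub>C x - a *\<^sub>C y"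
  by (simp only: diff_conv_add_uminus scaleC_add_right scaleC_minus_right)

lemma norm_scaleC: "norm (a *\<^sub>C x) = cmod a * norm x"
proof -
  have "complex_of_real ((norm (a *\<^sub>C x))\<^sup>2) = cinner (a *\<^sub>C x) (a *\<^sub>C x)"
    by (simp add: cinner_self_norm)
  also have "\<dots> = (a * cnj a) * cinner x x"
    by (simp add: cinner_scaleC_left cinner_scaleC_right mult.assoc)
  also have "a * cnj a = complex_of_real ((cmod a)\<^sup>2)"
    by (rule complex_norm_square[symmetric])
  also have "cinner x x = complex_of_real ((norm x)\<^sup>2)"
    by (simp add: cinner_self_norm)
  finally have "(norm (a *\<^sub>C x))\<^sup>2 = (cmod a * norm x)\<^sup>2"
    by (simp only: of_real_mult[symmetric] of_real_eq_iff power_mult_distrib)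
  then show ?thesis
    by (simp add: power2_eq_iff_nonneg)
qed

lemma norm_add_square: "(norm (x + y))\<^sup>2 = (norm x)\<^sup>2 + 2 * Re (cinner x y) + (norm y)\<^sup>2"
proof -
  have "Re (cinner (x + y) (x + y))
      = Re (cinner x x) + Re (cinner x y) + Re (cinner y x) + Re (cinner y y)"
    by (simp add: cinner_add_left cinner_add_right)
  moreover have "Re (cinner y x) = Re (cinner x y)"
    by (subst cinner_commute) simp
  ultimately show ?thesis
    by (simp add: cinner_self_norm)
qed

lemma norm_diff_square: "(norm (x - y))\<^sup>2 = (norm x)\<^sup>2 - 2 * Re (cinner x y) + (norm y)\<^sup>2"
  using norm_add_square[of x "- y"] by (simp add: cinner_minus_right)

lemma parallelogram_law:
  fixes x y :: "'a::complex_hilbert"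
  shows "(norm (x + y))\<^sup>2 + (norm (x - y))\<^sup>2 = 2 * (norm x)\<^sup>2 + 2 * (norm y)\<^sup>2"
  by (simp add: norm_add_square norm_diff_square)

lemma norm_diff_projection_square:
  assumes "v \<noteq> 0"
  shows "(norm (w - (cinner w v / complex_of_real ((norm v)\<^sup>2)) *\<^sub>C v))\<^sup>2
         = (norm w)\<^sup>2 - (cmod (cinner w v))\<^sup>2 / (norm v)\<^sup>2"
proof -
  have nv: "norm v > 0"
    using assms by simp
  define c where "c = cinner w v / complex_of_real ((norm v)\<^sup>2)"
  have "(norm (w - c *\<^sub>C v))\<^sup>2 = (norm w)\<^sup>2 - 2 * Re (cnj c * cinner w v) + (cmod c)\<^sup>2 * (norm v)\<^sup>2"
    by (simp add: norm_diff_square cinner_scaleC_right norm_scaleC power_mult_distrib)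
  also have "cnj c * cinner w v = (cinner w v * cnj (cinner w v)) / complex_of_real ((norm v)\<^sup>2)"
    by (simp add: c_def)
  also have "cinner w v * cnj (cinner w v) = complex_of_real ((cmod (cinner w v))\<^sup>2)"
    by (rule complex_norm_square[symmetric])
  also have "complex_of_real ((cmod (cinner w v))\<^sup>2) / complex_of_real ((norm v)\<^sup>2)
      = complex_of_real ((cmod (cinner w v))\<^sup>2 / (norm v)\<^sup>2)"
    by simp
  also have "(cmod c)\<^sup>2 = (cmod (cinner w v))\<^sup>2 / (norm v)\<^sup>2 / (norm v)\<^sup>2"
  proof -
    have "cmod c = cmod (cinner w v) / \<bar>(norm v)\<^sup>2\<bar>"
      unfolding c_def norm_divide norm_of_real ..
    then show ?thesis
      by (simp add: power_divide power2_eq_square)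
  qed
  finally show ?thesis
    using nv unfolding c_def by (simp add: field_simps power2_eq_square)
qed

lemma cmod_cinner_le: "cmod (cinner x y) \<le> norm x * norm y"
proof (cases "y = 0")
  case False
  have "0 \<le> (norm (x - (cinner x y / complex_of_real ((norm y)\<^sup>2)) *\<^sub>C y))\<^sup>2"
    by simp
  also have "\<dots> = (norm x)\<^sup>2 - (cmod (cinner x y))\<^sup>2 / (norm y)\<^sup>2"
    by (rule norm_diff_projection_square[OF False])
  finally have "(cmod (cinner x y))\<^sup>2 / (norm y)\<^sup>2 \<le> (norm x)\<^sup>2"
    by simp
  then have "(cmod (cinner x y))\<^sup>2 \<le> (norm x * norm y)\<^sup>2"
    using False by (simp add: divide_le_eq power_mult_distrib)
  then show ?thesis
    by (simp add: abs_le_square_iff)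
qed simp

lemma tendsto_cinner_left:
  assumes "f \<longlonglongrightarrow> x"
  shows "(\<lambda>n. cinner (f n) y) \<longlonglongrightarrow> cinner x y"
proof -
  have "(\<lambda>n. f n - x) \<longlonglongrightarrow> 0"
    using assms by (rule LIM_zero)
  then have "(\<lambda>n. cinner (f n - x) y) \<longlonglongrightarrow> 0"
    by (rule tendsto_0_le[where K = "norm y"]) (simp add: cmod_cinner_le)
  then show ?thesis
    by (simp add: cinner_diff_left LIM_zero_iff)
qed

lemma tendsto_cinner_right:
  assumes "f \<longlonglongrightarrow> x"
  shows "(\<lambda>n. cinner y (f n)) \<longlonglongrightarrow> cinner y x"
  using tendsto_cnj[OF tendsto_cinner_left[OF assms, of y]]
  by (simp add: cinner_commute[of y])

lemma orthogonal_to_dense_eq_zero: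
  assumes "closure D = UNIV" and "\<And>x. x \<in> D \<Longrightarrow> cinner x w = 0"
  shows "w = 0"
proof -
  obtain f where "\<And>n. f n \<in> D" "f \<longlonglongrightarrow> w"
    using closure_sequential assms(1) by blast
  then have "(\<lambda>n. 0) \<longlonglongrightarrow> cinner w w"
    using tendsto_cinner_left[of f w w] assms(2) by simp
  then have "cinner w w = 0"
    using LIMSEQ_unique tendsto_const by blast
  then show ?thesis
    by (simp add: cinner_self_norm)
qed

lemma tendsto_scaleC_zero:
  assumes "f \<longlonglongrightarrow> 0"
  shows "(\<lambda>n. c *\<^sub>C f n) \<longlonglongrightarrow> 0"
  using assms by (rule tendsto_0_le[where K = "cmod c"]) (simp add: norm_scaleC)

section \<open>The closed graph theorem\<close>

lemma Baire_nonempty_interior: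
  fixes E :: "nat \<Rightarrow> 'a::{real_normed_vector,complete_space} set"
  assumes closed: "\<And>n. closed (E n)" and cover: "(\<Union>n. E n) = UNIV"
  shows "\<exists>n. interior (E n) \<noteq> {}"
proof (rule ccontr)
  assume "\<not> ?thesis"
  then have "euclidean interior_of \<Union>(range E) = {}"
    using closed by (intro Baire_category_alt)
      (auto simp: completely_metrizable_space_euclidean closed_closedin[symmetric])
  then show False
    using cover by simp
qed

lemma linear_bounded_approximation_near_zero:
  fixes K :: "'a::banach \<Rightarrow> 'b::real_normed_vector"
  assumes "linear K"
  obtains r B where "r > 0" "B \<ge> 0"
    "\<And>h e. norm h < r \<Longrightarrow> e > 0 \<Longrightarrow> \<exists>a. norm (K a) \<le> B \<and> norm (h - a) < e"
proof -
  define E where "E n = closure {g. norm (K g) \<le> real n}" for n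
  have "g \<in> E (nat \<lceil>norm (K g)\<rceil>)" for g
    unfolding E_def by (rule subsetD[OF closure_subset]) (simp add: real_nat_ceiling_ge)
  then have "(\<Union>n. E n) = UNIV"
    by blast
  then obtain n where "interior (E n) \<noteq> {}"
    using Baire_nonempty_interior[of E] by (auto simp: E_def)
  then obtain g0 r where r: "r > 0" "ball g0 r \<subseteq> E n"
    by (meson ex_in_conv mem_interior)
  have "\<exists>a. norm (K a) \<le> 2 * real n \<and> norm (h - a) < e" if "norm h < r" "e > 0" for h e
  proof -
    have "g0 + h \<in> E n" "g0 \<in> E n"
      using r that by (auto simp: dist_norm)
    moreover have "\<exists>a. norm (K a) \<le> real n \<and> dist a x < e/2" if "x \<in> E n" for x
      using that \<open>e > 0\<close> unfolding E_def closure_approachable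
      by (meson half_gt_zero mem_Collect_eq)
    ultimately obtain a1 a2 where a1: "norm (K a1) \<le> real n" "dist a1 (g0 + h) < e/2"
      and a2: "norm (K a2) \<le> real n" "dist a2 g0 < e/2"
      by blast
    have Ka: "norm (K (a1 - a2)) \<le> 2 * real n"
      using a1 a2 norm_triangle_ineq4[of "K a1" "K a2"] linear_diff[OF assms] by simp
    have "norm (h - (a1 - a2)) = norm ((g0 + h - a1) + (a2 - g0))"
      by (rule arg_cong[where f = norm]) (simp add: algebra_simps)
    also have "\<dots> \<le> norm (g0 + h - a1) + norm (a2 - g0)"
      by (rule norm_triangle_ineq)
    also have "\<dots> < e"
      using a1 a2 by (simp add: dist_norm norm_minus_commute)
    finally show ?thesis
      using Ka by blast
  qed
  then show ?thesis
    using that[of r "2 * real n"] r by simp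
qed

lemma linear_bounded_approximation:
  fixes K :: "'a::banach \<Rightarrow> 'b::real_normed_vector"
  assumes lin: "linear K"
  obtains L where "L > 0" "\<And>h e. e > 0 \<Longrightarrow> \<exists>a. norm (K a) \<le> L * norm h \<and> norm (h - a) < e"
proof -
  obtain r B where r: "r > 0" and B: "B \<ge> 0"
    and approx: "\<And>h e. norm h < r \<Longrightarrow> e > 0 \<Longrightarrow> \<exists>a. norm (K a) \<le> B \<and> norm (h - a) < e"
    using linear_bounded_approximation_near_zero[OF lin] by blast
  define L where "L = 2 * B / r + 1"
  have L: "L > 0" "2 * B / r \<le> L"
    using r B by (simp_all add: L_def add_nonneg_pos)
  have "\<exists>a. norm (K a) \<le> L * norm h \<and> norm (h - a) < e" if e: "e > 0" for h e
  proof (cases "h = 0")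
    case True
    then show ?thesis
      using e linear_0[OF lin] by (intro exI[of _ 0]) simp
  next
    case False
    define s where "s = r / (2 * norm h)"
    have s: "s > 0" "norm (s *\<^sub>R h) < r"
      using r False by (simp_all add: s_def)
    then obtain a where a: "norm (K a) \<le> B" "norm (s *\<^sub>R h - a) < e * s"
      using approx[of "s *\<^sub>R h" "e * s"] e by auto
    have "norm (K ((1/s) *\<^sub>R a)) = norm (K a) / s"
      using s(1) by (simp add: linear_scale[OF lin])
    also have "\<dots> \<le> B / s"
      using a(1) s(1) by (simp add: divide_right_mono)
    also have "B / s = 2 * B / r * norm h"
      using False r by (simp add: s_def)
    also have "\<dots> \<le> L * norm h"
      using L(2) by (rule mult_right_mono) simp
    finally have "norm (K ((1/s) *\<^sub>R a)) \<le> L * norm h" .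
    moreover have "s *\<^sub>R (h - (1/s) *\<^sub>R a) = s *\<^sub>R h - a"
      using s by (simp add: scaleR_right_diff_distrib)
    then have "s * norm (h - (1/s) *\<^sub>R a) = norm (s *\<^sub>R h - a)"
      using s by (metis norm_scaleR abs_of_pos)
    then have "norm (h - (1/s) *\<^sub>R a) < e"
      using a(2) s(1) by (metis mult.commute mult_less_cancel_left_pos)
    ultimately show ?thesis
      by blast
  qed
  then show ?thesis
    using that L by blast
qed

lemma bounded_approximation_series:
  fixes K :: "'a::real_normed_vector \<Rightarrow> 'b::real_normed_vector"
  assumes approx: "\<And>h e. e > 0 \<Longrightarrow> \<exists>a. norm (K a) \<le> L * norm h \<and> norm (h - a) < e"
    and "L \<ge> 0" and "h \<noteq> 0"
  obtains a where "(\<lambda>m. \<Sum>i<m. a i) \<longlonglongrightarrow> h" "\<And>k. norm (K (a k)) \<le> L * norm h * (1/2) ^ k"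
proof -
  define ch where "ch g e = (SOME a. norm (K a) \<le> L * norm g \<and> norm (g - a) < e)" for g e
  have ch: "norm (K (ch g e)) \<le> L * norm g" "norm (g - ch g e) < e" if "e > 0" for g e
    using someI_ex[OF approx[OF that, of g]] by (simp_all add: ch_def)
  define eps where "eps k = norm h / 2 ^ Suc k" for k
  have eps: "eps k > 0" for k
    using assms(3) by (simp add: eps_def)
  define rest where "rest = rec_nat h (\<lambda>k g. g - ch g (eps k))"
  define a where "a k = ch (rest k) (eps k)" for k
  have rest_Suc: "rest (Suc k) = rest k - a k" for k
    by (simp add: rest_def a_def)
  have rest_le: "norm (rest k) \<le> norm h / 2 ^ k" for k
  proof (cases k)
    case (Suc j)
    then show ?thesis
      using ch(2)[OF eps, of "rest j" j] by (simp add: rest_Suc a_def eps_def)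
  qed (simp add: rest_def)
  have "(\<lambda>m. \<Sum>i<m. a i) = (\<lambda>m. h - rest m)"
  proof
    show "(\<Sum>i<m. a i) = h - rest m" for m
      by (induction m) (simp_all add: rest_Suc, simp add: rest_def)
  qed
  moreover have "rest \<longlonglongrightarrow> 0"
  proof (rule tendsto_0_le[where K = 1])
    show "(\<lambda>k. norm h * (1/2) ^ k) \<longlonglongrightarrow> 0"
      using tendsto_mult_right_zero[OF LIMSEQ_realpow_zero[of "1/2"]] by simp
    show "\<forall>\<^sub>F k in sequentially. norm (rest k) \<le> norm (norm h * (1/2) ^ k) * 1"
      using rest_le by (simp add: power_divide)
  qed
  ultimately have "(\<lambda>m. \<Sum>i<m. a i) \<longlonglongrightarrow> h"
    using tendsto_diff[OF tendsto_const[of h], of rest 0] by simp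
  moreover have "norm (K (a k)) \<le> L * norm h * (1/2) ^ k" for k
  proof -
    have "norm (K (a k)) \<le> L * norm (rest k)"
      using ch(1)[OF eps] by (simp add: a_def)
    also have "\<dots> \<le> L * (norm h / 2 ^ k)"
      using rest_le \<open>L \<ge> 0\<close> by (rule mult_left_mono)
    finally show ?thesis
      by (simp add: power_divide)
  qed
  ultimately show ?thesis
    using that by blast
qed

theorem closed_graph_imp_bounded_linear:
  fixes K :: "'a::banach \<Rightarrow> 'b::banach"
  assumes lin: "linear K"
    and closed_graph: "\<And>f g h. f \<longlonglongrightarrow> g \<Longrightarrow> (\<lambda>n. K (f n)) \<longlonglongrightarrow> h \<Longrightarrow> K g = h"
  shows "bounded_linear K"
proof -
  obtain L where L: "L > 0" and approx: "\<And>h e. e > 0 \<Longrightarrow> \<exists>a. norm (K a) \<le> L * norm h \<and> norm (h - a) < e"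
    using linear_bounded_approximation[OF lin] by blast
  have "norm (K h) \<le> norm h * (2 * L)" for h
  proof (cases "h = 0")
    case True
    then show ?thesis
      using linear_0[OF lin] by simp
  next
    case False
    obtain a where sum: "(\<lambda>m. \<Sum>i<m. a i) \<longlonglongrightarrow> h"
      and Ka: "\<And>k. norm (K (a k)) \<le> L * norm h * (1/2) ^ k"
      using bounded_approximation_series[OF approx _ False] L by auto
    have geometric: "summable (\<lambda>k. L * norm h * (1/2::real) ^ k)"
      by (intro summable_mult summable_geometric) simp
    have norms_summable: "summable (\<lambda>k. norm (K (a k)))"
      using Ka by (intro summable_comparison_test'[OF geometric]) auto
    have "(\<lambda>m. K (\<Sum>i<m. a i)) \<longlonglongrightarrow> (\<Sum>k. K (a k))"
      using summable_LIMSEQ[OF summable_norm_cancel[OF norms_summable]]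
      by (simp add: linear_sum[OF lin])
    then have "K h = (\<Sum>k. K (a k))"
      by (rule closed_graph[OF sum])
    then have "norm (K h) \<le> (\<Sum>k. norm (K (a k)))"
      using summable_norm[OF norms_summable] by simp
    also have "\<dots> \<le> (\<Sum>k. L * norm h * (1/2::real) ^ k)"
      using Ka by (intro suminf_le[OF _ norms_summable geometric]) auto
    also have "\<dots> = norm h * (2 * L)"
      by (simp add: suminf_mult suminf_geometric[of "1/2::real"])
    finally show ?thesis .
  qed
  then show ?thesis
    using lin by (intro bounded_linear_intro) (auto simp: linear_add linear_scale)
qed

section \<open>Nearest points and closed subspaces\<close>

lemma nearest_point_exists:
  fixes M :: "'a::complex_hilbert set"
  assumes "closed M" and "M \<noteq> {}"
    and midpoint: "\<And>x y. x \<in> M \<Longrightarrow> y \<in> M \<Longrightarrow> (1/2) *\<^sub>R (x + y) \<in> M"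
  obtains m where "m \<in> M" "\<And>v. v \<in> M \<Longrightarrow> norm (z - m) \<le> norm (z - v)"
proof -
  define d where "d = Inf ((\<lambda>m. (norm (z - m))\<^sup>2) ` M)"
  have d_le: "d \<le> (norm (z - m))\<^sup>2" if "m \<in> M" for m
    unfolding d_def using that by (intro cInf_lower bdd_belowI[of _ 0]) auto
  have "\<exists>m\<in>M. (norm (z - m))\<^sup>2 < d + 1 / real (Suc k)" for k
    using cInf_lessD[of "(\<lambda>m. (norm (z - m))\<^sup>2) ` M" "d + 1 / real (Suc k)"] \<open>M \<noteq> {}\<close>
    by (auto simp: d_def)
  then obtain ms where ms: "\<And>k. ms k \<in> M" "\<And>k. (norm (z - ms k))\<^sup>2 < d + 1 / real (Suc k)"
    by metis
  have close: "(norm (ms j - ms k))\<^sup>2 \<le> 2 / real (Suc j) + 2 / real (Suc k)" for j k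
  proof -
    have "4 * d \<le> 4 * (norm (z - (1/2) *\<^sub>R (ms j + ms k)))\<^sup>2"
      using d_le[OF midpoint[OF ms(1) ms(1)]] by simp
    also have "\<dots> = (norm ((z - ms j) + (z - ms k)))\<^sup>2"
    proof -
      have "(z - ms j) + (z - ms k) = 2 *\<^sub>R (z - (1/2) *\<^sub>R (ms j + ms k))"
        by (simp add: algebra_simps scaleR_2)
      then show ?thesis
        by (simp add: power_mult_distrib)
    qed
    finally show ?thesis
      using parallelogram_law[of "z - ms j" "z - ms k"] ms(2)[of j] ms(2)[of k]
      by (simp add: norm_minus_commute)
  qed
  have "Cauchy ms"
  proof (rule metric_CauchyI)
    fix e :: real
    assume "e > 0"
    then obtain N where N: "inverse (real (Suc N)) < e\<^sup>2 / 4"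
      using reals_Archimedean[of "e\<^sup>2 / 4"] by auto
    have "dist (ms j) (ms k) < e" if "j \<ge> N" "k \<ge> N" for j k
    proof -
      have "1 / real (Suc j) \<le> inverse (real (Suc N))" "1 / real (Suc k) \<le> inverse (real (Suc N))"
        using that by (simp_all add: inverse_eq_divide frac_le)
      then have "(norm (ms j - ms k))\<^sup>2 < e\<^sup>2"
        using close[of j k] N by linarith
      then show ?thesis
        using \<open>e > 0\<close> by (simp add: dist_norm power_less_imp_less_base)
    qed
    then show "\<exists>N. \<forall>j\<ge>N. \<forall>k\<ge>N. dist (ms j) (ms k) < e"
      by blast
  qed
  then obtain m where m: "ms \<longlonglongrightarrow> m"
    using convergent_eq_Cauchy by blast
  have "m \<in> M"
    using \<open>closed M\<close> ms(1) m closed_sequentially by blast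
  moreover have "(norm (z - m))\<^sup>2 \<le> d"
  proof (rule LIMSEQ_le)
    show "(\<lambda>k. (norm (z - ms k))\<^sup>2) \<longlonglongrightarrow> (norm (z - m))\<^sup>2"
      using m by (intro tendsto_intros)
    show "(\<lambda>k. d + 1 / real (Suc k)) \<longlonglongrightarrow> d"
      using tendsto_add[OF tendsto_const LIMSEQ_inverse_real_of_nat] by (simp add: inverse_eq_divide)
    show "\<exists>N. \<forall>k\<ge>N. (norm (z - ms k))\<^sup>2 \<le> d + 1 / real (Suc k)"
      using ms(2) less_imp_le by blast
  qed
  then have "norm (z - m) \<le> norm (z - v)" if "v \<in> M" for v
    using d_le[OF that] by (simp add: power2_le_imp_le)
  ultimately show ?thesis
    using that by blast
qed

lemma nearest_point_orthogonal:
  fixes M :: "'a::complex_hilbert set"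
  assumes "csubspace M" and "m \<in> M" and nearest: "\<And>v. v \<in> M \<Longrightarrow> norm (z - m) \<le> norm (z - v)"
    and "v \<in> M"
  shows "cinner (z - m) v = 0"
proof (cases "v = 0")
  case False
  define t where "t = cinner (z - m) v / complex_of_real ((norm v)\<^sup>2)"
  have "m + t *\<^sub>C v \<in> M"
    using assms(1,2,4) by (simp add: csubspace_def)
  then have "norm (z - m) \<le> norm ((z - m) - t *\<^sub>C v)"
    using nearest by (simp add: diff_diff_eq)
  then have "(norm (z - m))\<^sup>2 \<le> (norm ((z - m) - t *\<^sub>C v))\<^sup>2"
    by (rule power_mono) simp
  then have "(cmod (cinner (z - m) v))\<^sup>2 / (norm v)\<^sup>2 \<le> 0"
    using norm_diff_projection_square[OF False, of "z - m"] unfolding t_def by linarith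
  then show ?thesis
    using False by (simp add: divide_le_0_iff)
qed simp

lemma closed_csubspace_eq_UNIV:
  fixes M :: "'a::complex_hilbert set"
  assumes "closed M" and M: "csubspace M"
    and orthogonal: "\<And>w. (\<And>m. m \<in> M \<Longrightarrow> cinner m w = 0) \<Longrightarrow> w = 0"
  shows "M = UNIV"
proof -
  have midpoint: "(1/2) *\<^sub>R (x + y) \<in> M" if "x \<in> M" "y \<in> M" for x y
    using M that unfolding csubspace_def by (metis scaleC_of_real)
  have nonempty: "M \<noteq> {}"
    using M by (auto simp: csubspace_def)
  have "z \<in> M" for z
  proof -
    obtain m where m: "m \<in> M" and nearest: "\<And>v. v \<in> M \<Longrightarrow> norm (z - m) \<le> norm (z - v)"
      using nearest_point_exists[OF \<open>closed M\<close> nonempty midpoint] by blast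
    have "cinner v (z - m) = 0" if "v \<in> M" for v
      using nearest_point_orthogonal[OF M m nearest that] cinner_commute[of v "z - m"] by simp
    then have "z - m = 0"
      by (rule orthogonal)
    then show "z \<in> M"
      using m by simp
  qed
  then show ?thesis
    by blast
qed

section \<open>Linear and selfadjoint operators\<close>

lemma opdom_opmult [simp]: "x \<in> opdom (opmult S T) \<longleftrightarrow> x \<in> opdom T \<and> opfun T x \<in> opdom S"
  by (simp add: opmult_def opdom_def)

lemma opfun_opmult [simp]: "opfun (opmult S T) x = opfun S (opfun T x)"
  by (simp add: opmult_def opfun_def)

locale linear_operator =
  fixes T :: "'a::complex_hilbert lop"
  assumes linear: "linear_op T"
begin

lemma dom_zero: "0 \<in> opdom T"
  using linear by (simp add: linear_op_def csubspace_def)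

lemma dom_add: "x \<in> opdom T \<Longrightarrow> y \<in> opdom T \<Longrightarrow> x + y \<in> opdom T"
  using linear by (simp add: linear_op_def csubspace_def)

lemma dom_scaleC: "x \<in> opdom T \<Longrightarrow> c *\<^sub>C x \<in> opdom T"
  using linear by (simp add: linear_op_def csubspace_def)

lemma apply_add: "x \<in> opdom T \<Longrightarrow> y \<in> opdom T \<Longrightarrow> opfun T (x + y) = opfun T x + opfun T y"
  using linear by (simp add: linear_op_def)

lemma apply_scaleC: "x \<in> opdom T \<Longrightarrow> opfun T (c *\<^sub>C x) = c *\<^sub>C opfun T x"
  using linear by (simp add: linear_op_def)

lemma dom_scaleR: "x \<in> opdom T \<Longrightarrow> r *\<^sub>R x \<in> opdom T"
  by (metis dom_scaleC scaleC_of_real)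

lemma apply_scaleR: "x \<in> opdom T \<Longrightarrow> opfun T (r *\<^sub>R x) = r *\<^sub>R opfun T x"
  by (metis apply_scaleC scaleC_of_real)

lemma dom_diff: "x \<in> opdom T \<Longrightarrow> y \<in> opdom T \<Longrightarrow> x - y \<in> opdom T"
  using dom_add[of x "(-1) *\<^sub>R y"] dom_scaleR[of y "-1"] by simp

lemma apply_diff: "x \<in> opdom T \<Longrightarrow> y \<in> opdom T \<Longrightarrow> opfun T (x - y) = opfun T x - opfun T y"
  using apply_add[of x "(-1) *\<^sub>R y"] dom_scaleR[of y "-1"] apply_scaleR[of y "-1"] by simp

lemma apply_zero: "opfun T 0 = 0"
  using apply_scaleR[OF dom_zero, of 0] by simp

lemma range_csubspace: "csubspace (opfun T ` opdom T)"
  unfolding csubspace_def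
proof (intro conjI ballI allI)
  show "0 \<in> opfun T ` opdom T"
    using dom_zero apply_zero by (metis image_eqI)
next
  fix x y
  assume "x \<in> opfun T ` opdom T" "y \<in> opfun T ` opdom T"
  then obtain p q where "p \<in> opdom T" "q \<in> opdom T" "x = opfun T p" "y = opfun T q"
    by blast
  then show "x + y \<in> opfun T ` opdom T"
    by (metis apply_add dom_add image_eqI)
next
  fix c x
  assume "x \<in> opfun T ` opdom T"
  then obtain p where "p \<in> opdom T" "x = opfun T p"
    by blast
  then show "c *\<^sub>C x \<in> opfun T ` opdom T"
    by (metis apply_scaleC dom_scaleC image_eqI)
qed

lemma bounded_below_imp_inj:
  assumes "\<And>x. x \<in> opdom T \<Longrightarrow> norm x \<le> c * norm (opfun T x)"
  shows "inj_on (opfun T) (opdom T)"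
proof (rule inj_onI)
  fix x y
  assume "x \<in> opdom T" "y \<in> opdom T" "opfun T x = opfun T y"
  then show "x = y"
    using assms[of "x - y"] by (simp add: dom_diff apply_diff)
qed

lemma not_bounded_below_imp_approximate_kernel:
  assumes "\<not> (\<exists>c. \<forall>x\<in>opdom T. norm x \<le> c * norm (opfun T x))"
  obtains xs where "\<And>n. xs n \<in> opdom T" "\<And>n. norm (xs n) = 1" "(\<lambda>n. opfun T (xs n)) \<longlonglongrightarrow> 0"
proof -
  have "\<forall>n. \<exists>x. x \<in> opdom T \<and> norm x = 1 \<and> norm (opfun T x) < 1 / real (Suc n)"
  proof
    fix n
    obtain y where y: "y \<in> opdom T" "norm y > real (Suc n) * norm (opfun T y)"
      using assms by (meson not_le)
    then have "y \<noteq> 0"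
      by (auto simp: apply_zero)
    define x where "x = (1 / norm y) *\<^sub>R y"
    have "norm (opfun T x) = norm (opfun T y) / norm y"
      using y by (simp add: x_def apply_scaleR)
    also have "\<dots> < 1 / real (Suc n)"
      using y \<open>y \<noteq> 0\<close> by (simp add: pos_divide_less_eq less_divide_eq mult.commute)
    finally show "\<exists>x. x \<in> opdom T \<and> norm x = 1 \<and> norm (opfun T x) < 1 / real (Suc n)"
      using y \<open>y \<noteq> 0\<close> by (intro exI[of _ x]) (simp add: x_def dom_scaleR)
  qed
  then obtain xs where "\<forall>n. xs n \<in> opdom T \<and> norm (xs n) = 1 \<and> norm (opfun T (xs n)) < 1 / real (Suc n)"
    by (metis choice)
  then show ?thesis
    using that LIMSEQ_norm_0[of "\<lambda>n. opfun T (xs n)"] by blast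
qed

end

lemma linear_op_opmult:
  assumes "linear_op S" and "linear_op T"
  shows "linear_op (opmult S T)"
proof -
  interpret S: linear_operator S by (rule linear_operator.intro) fact
  interpret T: linear_operator T by (rule linear_operator.intro) fact
  show ?thesis
    by (auto simp: linear_op_def csubspace_def S.dom_zero T.dom_zero T.apply_zero S.dom_add T.dom_add
        T.apply_add S.apply_add S.dom_scaleC T.dom_scaleC T.apply_scaleC S.apply_scaleC)
qed

locale selfadjoint_operator =
  fixes T :: "'a::complex_hilbert lop"
  assumes selfadjoint: "selfadjoint T"
begin

sublocale linear_operator T
  using selfadjoint by unfold_locales (simp add: selfadjoint_def)

lemma symmetric: "x \<in> opdom T \<Longrightarrow> y \<in> opdom T \<Longrightarrow> cinner (opfun T x) y = cinner x (opfun T y)"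
  using selfadjoint by (simp add: selfadjoint_def)

lemma dense_domain: "closure (opdom T) = UNIV"
  using selfadjoint by (simp add: selfadjoint_def)

lemma adjoint_eq:
  assumes "\<And>x. x \<in> opdom T \<Longrightarrow> cinner (opfun T x) y = cinner x z"
  shows "y \<in> opdom T" and "opfun T y = z"
proof -
  show y: "y \<in> opdom T"
    using selfadjoint assms unfolding selfadjoint_def by blast
  have "cinner x (opfun T y - z) = 0" if "x \<in> opdom T" for x
    using assms[OF that] symmetric[OF that y] by (simp add: cinner_diff_right)
  then have "opfun T y - z = 0"
    by (rule orthogonal_to_dense_eq_zero[OF dense_domain])
  then show "opfun T y = z"
    by simp
qed

lemma closed_graph:
  assumes "\<And>n. u n \<in> opdom T" and "u \<longlonglongrightarrow> x" and "(\<lambda>n. opfun T (u n)) \<longlonglongrightarrow> h"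
  shows "x \<in> opdom T" and "opfun T x = h"
proof -
  have adjoint: "cinner (opfun T y) x = cinner y h" if y: "y \<in> opdom T" for y
  proof -
    have "(\<lambda>n. cinner (opfun T y) (u n)) \<longlonglongrightarrow> cinner (opfun T y) x"
      by (rule tendsto_cinner_right[OF assms(2)])
    moreover have "(\<lambda>n. cinner y (opfun T (u n))) \<longlonglongrightarrow> cinner y h"
      by (rule tendsto_cinner_right[OF assms(3)])
    moreover have "cinner (opfun T y) (u n) = cinner y (opfun T (u n))" for n
      using symmetric[OF y assms(1)] .
    ultimately show ?thesis
      using LIMSEQ_unique by fastforce
  qed
  show "x \<in> opdom T"
    using adjoint by (rule adjoint_eq(1))
  show "opfun T x = h"
    using adjoint by (rule adjoint_eq(2))
qed

lemma bounded_below_imp_closed_range: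
  assumes bounded_below: "\<And>x. x \<in> opdom T \<Longrightarrow> norm x \<le> c * norm (opfun T x)"
  shows "closed (opfun T ` opdom T)"
  unfolding closed_sequential_limits
proof (intro allI impI, elim conjE)
  fix f h
  assume "\<forall>n. f n \<in> opfun T ` opdom T" and fh: "f \<longlonglongrightarrow> h"
  then have "\<forall>n. \<exists>p. p \<in> opdom T \<and> f n = opfun T p"
    by blast
  then obtain x where "\<forall>n. x n \<in> opdom T \<and> f n = opfun T (x n)"
    by (metis choice)
  then have x: "\<And>n. x n \<in> opdom T" and f: "f = (\<lambda>n. opfun T (x n))"
    by auto
  have "Cauchy x"
  proof (rule metric_CauchyI)
    fix e :: real
    assume "e > 0"
    then have "e / (\<bar>c\<bar> + 1) > 0"
      by simp
    then obtain N where N: "\<forall>m\<ge>N. \<forall>n\<ge>N. dist (f m) (f n) < e / (\<bar>c\<bar> + 1)"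
      using metric_CauchyD[OF LIMSEQ_imp_Cauchy[OF fh]] by blast
    have "dist (x m) (x n) < e" if "m \<ge> N" "n \<ge> N" for m n
    proof -
      have "norm (x m - x n) \<le> c * norm (opfun T (x m) - opfun T (x n))"
        using bounded_below[of "x m - x n"] x by (simp add: dom_diff apply_diff)
      also have "\<dots> \<le> (\<bar>c\<bar> + 1) * dist (f m) (f n)"
        unfolding f dist_norm by (intro mult_right_mono) auto
      also have "\<dots> < (\<bar>c\<bar> + 1) * (e / (\<bar>c\<bar> + 1))"
        using N that by (intro mult_strict_left_mono) auto
      also have "\<dots> = e"
        by (simp add: add_pos_nonneg)
      finally show ?thesis
        by (simp add: dist_norm)
    qed
    then show "\<exists>N. \<forall>m\<ge>N. \<forall>n\<ge>N. dist (x m) (x n) < e"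
      by blast
  qed
  then obtain y where y: "x \<longlonglongrightarrow> y"
    using convergent_eq_Cauchy by blast
  have Tx: "(\<lambda>n. opfun T (x n)) \<longlonglongrightarrow> h"
    using fh by (simp only: f)
  show "h \<in> opfun T ` opdom T"
    using closed_graph[OF x y Tx] by (metis image_eqI)
qed

lemma bounded_below_imp_zero_in_resolvent_set:
  assumes bounded_below: "\<And>x. x \<in> opdom T \<Longrightarrow> norm x \<le> c * norm (opfun T x)"
  shows "0 \<in> resolvent_set T"
proof -
  have orthogonal: "w = 0" if "\<And>y. y \<in> opfun T ` opdom T \<Longrightarrow> cinner y w = 0" for w
  proof -
    have adjoint: "cinner (opfun T x) w = cinner x 0" if "x \<in> opdom T" for x
      using that \<open>\<And>y. y \<in> opfun T ` opdom T \<Longrightarrow> cinner y w = 0\<close> by simp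
    show "w = 0"
      using bounded_below[OF adjoint_eq(1)[OF adjoint]] adjoint_eq(2)[OF adjoint] by simp
  qed
  have "opfun T ` opdom T = UNIV"
    using bounded_below_imp_closed_range[OF bounded_below] range_csubspace orthogonal
    by (rule closed_csubspace_eq_UNIV)
  then show ?thesis
    using bounded_below_imp_inj[OF bounded_below] bounded_below by (auto simp: resolvent_set_def)
qed

end

section \<open>Resolvents\<close>

lemma resolvent_in_dom:
  assumes "lam \<in> resolvent_set S"
  shows "resolvent S lam y \<in> opdom S" and "opfun S (resolvent S lam y) - lam *\<^sub>C resolvent S lam y = y"
proof -
  from assms have inj: "inj_on (\<lambda>x. opfun S x - lam *\<^sub>C x) (opdom S)"
    and surj: "(\<lambda>x. opfun S x - lam *\<^sub>C x) ` opdom S = UNIV"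
    by (auto simp: resolvent_set_def)
  have "y \<in> (\<lambda>x. opfun S x - lam *\<^sub>C x) ` opdom S"
    using surj by simp
  then obtain x where "x \<in> opdom S" "opfun S x - lam *\<^sub>C x = y"
    by blast
  then have "\<exists>!x. x \<in> opdom S \<and> opfun S x - lam *\<^sub>C x = y"
    using inj by (auto simp: inj_on_def)
  then have "resolvent S lam y \<in> opdom S \<and> opfun S (resolvent S lam y) - lam *\<^sub>C resolvent S lam y = y"
    unfolding resolvent_def by (rule theI')
  then show "resolvent S lam y \<in> opdom S" and "opfun S (resolvent S lam y) - lam *\<^sub>C resolvent S lam y = y"
    by simp_all
qed

lemma resolvent_unique:
  assumes "lam \<in> resolvent_set S" and "x \<in> opdom S" and "opfun S x - lam *\<^sub>C x = y"
  shows "resolvent S lam y = x"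
  using assms resolvent_in_dom[OF assms(1), of y] unfolding resolvent_set_def inj_on_def by blast

lemma resolvent_set_bound:
  assumes "lam \<in> resolvent_set S"
  obtains C where "C \<ge> 0" "\<And>x. x \<in> opdom S \<Longrightarrow> norm x \<le> C * norm (opfun S x - lam *\<^sub>C x)"
proof -
  obtain C where C: "\<And>x. x \<in> opdom S \<Longrightarrow> norm x \<le> C * norm (opfun S x - lam *\<^sub>C x)"
    using assms by (auto simp: resolvent_set_def)
  have "norm x \<le> max C 0 * norm (opfun S x - lam *\<^sub>C x)" if "x \<in> opdom S" for x
    using C[OF that] mult_right_mono[of C "max C 0" "norm (opfun S x - lam *\<^sub>C x)"] by simp
  then show ?thesis
    using that[of "max C 0"] by simp
qed

lemma (in linear_operator) bounded_linear_resolvent: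
  assumes lam: "lam \<in> resolvent_set T"
  shows "bounded_linear (resolvent T lam)"
proof -
  note R = resolvent_in_dom[OF lam]
  obtain C where C: "\<And>x. x \<in> opdom T \<Longrightarrow> norm x \<le> C * norm (opfun T x - lam *\<^sub>C x)"
    using resolvent_set_bound[OF lam] by blast
  show ?thesis
  proof (rule bounded_linear_intro[where K = C])
    show "resolvent T lam (x + y) = resolvent T lam x + resolvent T lam y" for x y
      using R[of x] R[of y]
      by (intro resolvent_unique[OF lam]) (auto simp: dom_add apply_add scaleC_add_right algebra_simps)
    show "resolvent T lam (r *\<^sub>R x) = r *\<^sub>R resolvent T lam x" for r x
    proof (rule resolvent_unique[OF lam])
      show "r *\<^sub>R resolvent T lam x \<in> opdom T"
        using R(1) by (rule dom_scaleR)
      show "opfun T (r *\<^sub>R resolvent T lam x) - lam *\<^sub>C (r *\<^sub>R resolvent T lam x) = r *\<^sub>R x"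
        using R(2)[of x] apply_scaleR[OF R(1)]
        by (metis scaleC_diff_right scaleC_of_real scaleC_scaleC mult.commute)
    qed
    show "norm (resolvent T lam y) \<le> norm y * C" for y
      using C[OF R(1)[of y]] R(2)[of y] by (simp add: mult.commute)
  qed
qed

section \<open>The products \<open>AG\<close> and \<open>GA\<close>\<close>

lemma neutral_approximate_eigenvalue_notin_sigma_pp_sigma_mm:
  assumes "\<And>n. xs n \<in> opdom (opmult A G)" and "\<And>n. norm (xs n) = 1"
    and "(\<lambda>n. opfun (opmult A G) (xs n) - lam *\<^sub>C xs n) \<longlonglongrightarrow> 0"
    and "(\<lambda>n. kform A G lam0 (xs n) (xs n)) \<longlonglongrightarrow> 0"
  shows "lam \<notin> sigma_pp A G lam0 \<union> sigma_mm A G lam0"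
proof -
  let ?q = "\<lambda>n. ereal (Re (kform A G lam0 (xs n) (xs n)))"
  have "?q \<longlonglongrightarrow> 0"
    using tendsto_ereal[OF tendsto_Re[OF assms(4)]] by (simp add: zero_ereal_def)
  then have liminf: "liminf ?q = 0" and limsup: "limsup ?q = 0"
    by (simp_all add: lim_imp_Liminf lim_imp_Limsup)
  have approx: "(\<forall>n. xs n \<in> opdom (opmult A G) \<and> norm (xs n) = 1) \<and>
      (\<lambda>n. opfun (opmult A G) (xs n) - lam *\<^sub>C xs n) \<longlonglongrightarrow> 0"
    using assms(1-3) by blast
  have "lam \<notin> sigma_pp A G lam0"
  proof
    assume "lam \<in> sigma_pp A G lam0"
    then have "liminf ?q > 0"
      using approx unfolding sigma_pp_def by blast
    then show False
      using liminf by simp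
  qed
  moreover have "lam \<notin> sigma_mm A G lam0"
  proof
    assume "lam \<in> sigma_mm A G lam0"
    then have "limsup ?q < 0"
      using approx unfolding sigma_mm_def by blast
    then show False
      using limsup by simp
  qed
  ultimately show ?thesis
    by blast
qed

locale selfadjoint_pair =
  A: selfadjoint_operator A + G: selfadjoint_operator G for A G :: "'a::complex_hilbert lop"
begin

sublocale AG: linear_operator "opmult A G"
  by unfold_locales (rule linear_op_opmult[OF A.linear G.linear])

sublocale GA: linear_operator "opmult G A"
  by unfold_locales (rule linear_op_opmult[OF G.linear A.linear])

lemma GA_bounded_below_by_AG_resolvent:
  assumes nu: "nu \<in> resolvent_set (opmult A G)" and "C \<ge> 0"
    and C: "\<And>x. x \<in> opdom (opmult A G) \<Longrightarrow> norm x \<le> C * norm (opfun (opmult A G) x - nu *\<^sub>C x)"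
    and v: "v \<in> opdom (opmult G A)"
  shows "norm v \<le> C * norm (opfun (opmult G A) v - cnj nu *\<^sub>C v)"
proof -
  define s where "s = resolvent (opmult A G) nu v"
  have s: "s \<in> opdom G" "opfun G s \<in> opdom A" "opfun A (opfun G s) - nu *\<^sub>C s = v"
    using resolvent_in_dom[OF nu, of v] by (simp_all add: s_def)
  define w where "w = opfun (opmult G A) v - cnj nu *\<^sub>C v"
  \<comment> \<open>\<open>GA - cnj nu\<close> is contained in the adjoint of \<open>AG - nu\<close>\<close>
  have "cinner w s = cinner (opfun A v) (opfun G s) - cnj nu * cinner v s"
    using v s(1,2) by (simp add: w_def cinner_diff_left cinner_scaleC_left G.symmetric)
  also have "\<dots> = cinner v (opfun A (opfun G s) - nu *\<^sub>C s)"
    using v s(1,2) by (simp add: cinner_diff_right cinner_scaleC_right A.symmetric)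
  finally have "cinner w s = complex_of_real ((norm v)\<^sup>2)"
    by (simp add: s(3) cinner_self_norm)
  then have "(norm v)\<^sup>2 \<le> norm w * norm s"
    using cmod_cinner_le[of w s] by (simp del: of_real_power add: of_real_power[symmetric])
  also have "\<dots> \<le> norm w * (C * norm v)"
    using C[of s] s by (simp add: mult_left_mono)
  finally have "norm v * norm v \<le> (C * norm w) * norm v"
    by (simp add: power2_eq_square algebra_simps)
  then show ?thesis
    using \<open>C \<ge> 0\<close> by (cases "norm v = 0") (simp_all add: w_def mult_le_cancel_right)
qed

lemma G_resolvent_AG:
  assumes nu: "nu \<in> resolvent_set (opmult A G)" and x: "x \<in> opdom G"
  shows "opfun G (resolvent (opmult A G) nu x) \<in> opdom (opmult G A)"
    and "opfun (opmult G A) (opfun G (resolvent (opmult A G) nu x)) - nu *\<^sub>C opfun G (resolvent (opmult A G) nu x)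
      = opfun G x"
proof -
  define s where "s = resolvent (opmult A G) nu x"
  have s: "s \<in> opdom G" "opfun G s \<in> opdom A" "opfun A (opfun G s) = x + nu *\<^sub>C s"
    using resolvent_in_dom[OF nu, of x] by (simp_all add: s_def algebra_simps)
  have "x + nu *\<^sub>C s \<in> opdom G"
    using x s by (intro G.dom_add G.dom_scaleC)
  moreover have "opfun G (x + nu *\<^sub>C s) = opfun G x + nu *\<^sub>C opfun G s"
    using x s by (simp add: G.apply_add G.dom_scaleC G.apply_scaleC)
  ultimately show "opfun G s \<in> opdom (opmult G A)"
    and "opfun (opmult G A) (opfun G s) - nu *\<^sub>C opfun G s = opfun G x"
    using s by simp_all
qed

lemma norm_G_resolvent_AG_le:
  assumes "nu \<in> resolvent_set (opmult A G)" and "cnj nu \<in> resolvent_set (opmult A G)"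
  obtains C where "\<And>x. x \<in> opdom G \<Longrightarrow> norm (opfun G (resolvent (opmult A G) nu x)) \<le> C * norm (opfun G x)"
proof -
  obtain C where "C \<ge> 0"
    and C: "\<And>x. x \<in> opdom (opmult A G) \<Longrightarrow> norm x \<le> C * norm (opfun (opmult A G) x - cnj nu *\<^sub>C x)"
    using resolvent_set_bound[OF assms(2)] by blast
  have "norm (opfun G (resolvent (opmult A G) nu x)) \<le> C * norm (opfun G x)" if "x \<in> opdom G" for x
    using GA_bounded_below_by_AG_resolvent[OF assms(2) \<open>C \<ge> 0\<close> C G_resolvent_AG(1)[OF assms(1) that]]
      G_resolvent_AG(2)[OF assms(1) that] by simp
  then show ?thesis
    using that by blast
qed

lemma Gnull_bounded_by_G:
  assumes "lam \<in> resolvent_set (opmult A G)" and "cnj lam \<in> resolvent_set (opmult A G)"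
  obtains C where "\<And>x. x \<in> opdom G \<Longrightarrow> norm (Gnull A G lam x) \<le> C * norm (opfun G x)"
proof -
  obtain C1 where C1: "\<And>x. x \<in> opdom G \<Longrightarrow> norm (opfun G (resolvent (opmult A G) lam x)) \<le> C1 * norm (opfun G x)"
    using norm_G_resolvent_AG_le[OF assms] by blast
  obtain C2 where C2: "\<And>x. x \<in> opdom G \<Longrightarrow> norm (opfun G (resolvent (opmult A G) (cnj lam) x)) \<le> C2 * norm (opfun G x)"
    using norm_G_resolvent_AG_le[OF assms(2)] assms(1) by auto
  have "norm (Gnull A G lam x) \<le> \<bar>C1\<bar> * \<bar>C2\<bar> * norm (opfun G x)" if "x \<in> opdom G" for x
  proof -
    define r where "r = resolvent (opmult A G) (cnj lam) x"
    have "r \<in> opdom G"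
      using resolvent_in_dom(1)[OF assms(2), of x] by (simp add: r_def)
    then have "norm (Gnull A G lam x) \<le> \<bar>C1\<bar> * norm (opfun G r)"
      using C1[of r] by (simp add: Gnull_def r_def) (meson abs_ge_self mult_right_mono norm_ge_zero order_trans)
    also have "\<dots> \<le> \<bar>C1\<bar> * (\<bar>C2\<bar> * norm (opfun G x))"
      using C2[OF that] by (intro mult_left_mono) (auto simp: r_def intro: order_trans[OF _ mult_right_mono])
    finally show ?thesis
      by (simp add: mult.assoc)
  qed
  then show ?thesis
    using that by blast
qed


lemma kform_tendsto_zero:
  assumes "lam \<in> resolvent_set (opmult A G)" and "cnj lam \<in> resolvent_set (opmult A G)"
    and "\<And>n. xs n \<in> opdom G" and "\<And>n. norm (xs n) = 1" and "(\<lambda>n. opfun G (xs n)) \<longlonglongrightarrow> 0"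
  shows "(\<lambda>n. kform A G lam (xs n) (xs n)) \<longlonglongrightarrow> 0"
proof -
  obtain C where C: "\<And>x. x \<in> opdom G \<Longrightarrow> norm (Gnull A G lam x) \<le> C * norm (opfun G x)"
    using Gnull_bounded_by_G[OF assms(1,2)] by blast
  have bound: "norm (kform A G lam (xs n) (xs n)) \<le> norm (opfun G (xs n)) * C" for n
  proof -
    have "norm (kform A G lam (xs n) (xs n)) \<le> norm (Gnull A G lam (xs n))"
      using cmod_cinner_le[of "Gnull A G lam (xs n)" "xs n"] assms(4) by (simp add: kform_def)
    also have "\<dots> \<le> norm (opfun G (xs n)) * C"
      using C[OF assms(3)] by (simp add: mult.commute)
    finally show ?thesis .
  qed
  show ?thesis
    using bound by (intro tendsto_0_le[where K = C, OF assms(5)]) simp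
qed

lemma bounded_linear_A_resolvent_GA:
  assumes mu: "mu \<in> resolvent_set (opmult G A)"
  shows "bounded_linear (\<lambda>g. opfun A (resolvent (opmult G A) mu g))"
proof (rule closed_graph_imp_bounded_linear)
  let ?R = "resolvent (opmult G A) mu"
  have R: "bounded_linear ?R"
    by (rule GA.bounded_linear_resolvent[OF mu])
  have dom: "?R g \<in> opdom A" for g
    using resolvent_in_dom(1)[OF mu] by simp
  show "linear (\<lambda>g. opfun A (?R g))"
    by (rule linearI) (simp_all add: linear_simps[OF R] A.apply_add A.apply_scaleR dom)
  show "opfun A (?R g) = h" if "f \<longlonglongrightarrow> g" and "(\<lambda>n. opfun A (?R (f n))) \<longlonglongrightarrow> h" for f g h
    using A.closed_graph(2)[OF dom bounded_linear.tendsto[OF R that(1)] that(2)] .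
qed

lemma unnormalized_approximate_kernel_AG:
  assumes "resolvent_set (opmult G A) \<noteq> {}"
    and "\<not> (\<exists>c. \<forall>x\<in>opdom G. norm x \<le> c * norm (opfun G x))"
  obtains y where "\<And>n. y n \<in> opdom (opmult A G)" "(\<lambda>n. norm (y n)) \<longlonglongrightarrow> 1"
    "(\<lambda>n. opfun (opmult A G) (y n)) \<longlonglongrightarrow> 0" "(\<lambda>n. opfun G (y n)) \<longlonglongrightarrow> 0"
proof -
  obtain mu where mu: "mu \<in> resolvent_set (opmult G A)"
    using assms(1) by blast
  obtain xs where xs: "\<And>n. xs n \<in> opdom G" "\<And>n. norm (xs n) = 1" "(\<lambda>n. opfun G (xs n)) \<longlonglongrightarrow> 0"
    using G.not_bounded_below_imp_approximate_kernel[OF assms(2)] by blast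
  define u where "u n = resolvent (opmult G A) mu (opfun G (xs n))" for n
  have u: "u n \<in> opdom A" "opfun A (u n) \<in> opdom G" "opfun G (opfun A (u n)) - mu *\<^sub>C u n = opfun G (xs n)" for n
    using resolvent_in_dom[OF mu] by (simp_all add: u_def)
  have u_lim: "u \<longlonglongrightarrow> 0"
    unfolding u_def using bounded_linear.tendsto_zero[OF GA.bounded_linear_resolvent[OF mu] xs(3)] .
  have Au_lim: "(\<lambda>n. opfun A (u n)) \<longlonglongrightarrow> 0"
    unfolding u_def using bounded_linear.tendsto_zero[OF bounded_linear_A_resolvent_GA[OF mu] xs(3)] .
  define y where "y n = opfun A (u n) - xs n" for n
  have Gy: "y n \<in> opdom G" "opfun G (y n) = mu *\<^sub>C u n" for n
    using u(3)[of n] by (simp_all add: y_def G.dom_diff G.apply_diff u(2) xs(1) algebra_simps)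
  show ?thesis
  proof (rule that)
    show "y n \<in> opdom (opmult A G)" for n
      using Gy u(1) by (simp add: A.dom_scaleC)
    show "(\<lambda>n. opfun (opmult A G) (y n)) \<longlonglongrightarrow> 0"
      using tendsto_scaleC_zero[OF Au_lim, of mu] Gy u(1) by (simp add: A.apply_scaleC)
    show "(\<lambda>n. opfun G (y n)) \<longlonglongrightarrow> 0"
      using tendsto_scaleC_zero[OF u_lim, of mu] by (simp add: Gy(2))
    have "(\<lambda>n. norm (y n) - 1) \<longlonglongrightarrow> 0"
    proof (rule tendsto_0_le[OF Au_lim, where K = 1])
      show "\<forall>\<^sub>F n in sequentially. norm (norm (y n) - 1) \<le> norm (opfun A (u n)) * 1"
        using norm_triangle_ineq3[of "xs n - opfun A (u n)" "xs n" for n] xs(2)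
        by (simp add: y_def norm_minus_commute)
    qed
    then show "(\<lambda>n. norm (y n)) \<longlonglongrightarrow> 1"
      by (rule LIM_zero_cancel)
  qed
qed

lemma approximate_kernel_AG_if_G_not_bounded_below:
  assumes "resolvent_set (opmult G A) \<noteq> {}"
    and "\<not> (\<exists>c. \<forall>x\<in>opdom G. norm x \<le> c * norm (opfun G x))"
  obtains z where "\<And>n. z n \<in> opdom (opmult A G)" "\<And>n. norm (z n) = 1"
    "(\<lambda>n. opfun (opmult A G) (z n)) \<longlonglongrightarrow> 0" "(\<lambda>n. opfun G (z n)) \<longlonglongrightarrow> 0"
proof -
  obtain y where y: "\<And>n. y n \<in> opdom (opmult A G)" "(\<lambda>n. norm (y n)) \<longlonglongrightarrow> 1"
    "(\<lambda>n. opfun (opmult A G) (y n)) \<longlonglongrightarrow> 0" "(\<lambda>n. opfun G (y n)) \<longlonglongrightarrow> 0"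
    using unnormalized_approximate_kernel_AG[OF assms] by blast
  obtain N where N: "\<And>n. n \<ge> N \<Longrightarrow> norm (y n) > 0"
    using order_tendstoD(1)[OF y(2) zero_less_one] by (auto simp: eventually_sequentially)
  define z where "z n = (1 / norm (y (n + N))) *\<^sub>R y (n + N)" for n
  have scaled: "(\<lambda>n. (1 / norm (y (n + N))) *\<^sub>R f (n + N)) \<longlonglongrightarrow> 0" if "f \<longlonglongrightarrow> 0" for f :: "nat \<Rightarrow> 'a"
    using tendsto_scaleR[OF tendsto_divide[OF tendsto_const LIMSEQ_ignore_initial_segment[OF y(2)]]
        LIMSEQ_ignore_initial_segment[OF that]]
    by simp
  have AGz: "opfun (opmult A G) (z n) = (1 / norm (y (n + N))) *\<^sub>R opfun (opmult A G) (y (n + N))" for n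
    unfolding z_def by (rule AG.apply_scaleR[OF y(1)])
  have Gz: "opfun G (z n) = (1 / norm (y (n + N))) *\<^sub>R opfun G (y (n + N))" for n
    using y(1) unfolding z_def by (intro G.apply_scaleR) simp
  show ?thesis
  proof (rule that)
    show "z n \<in> opdom (opmult A G)" for n
      unfolding z_def by (rule AG.dom_scaleR[OF y(1)])
    show "norm (z n) = 1" for n
      using N[of "n + N"] by (simp add: z_def)
    show "(\<lambda>n. opfun (opmult A G) (z n)) \<longlonglongrightarrow> 0"
      unfolding AGz by (rule scaled[OF y(3)])
    show "(\<lambda>n. opfun G (z n)) \<longlonglongrightarrow> 0"
      unfolding Gz by (rule scaled[OF y(4)])
  qed
qed

lemma G_bounded_below:
  assumes "resolvent_set (opmult G A) \<noteq> {}"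
    and "lam0 \<in> resolvent_set (opmult A G)" and "cnj lam0 \<in> resolvent_set (opmult A G)"
    and "0 \<in> sigma_pp A G lam0 \<union> sigma_mm A G lam0"
  obtains c where "\<And>x. x \<in> opdom G \<Longrightarrow> norm x \<le> c * norm (opfun G x)"
proof (rule ccontr)
  assume "\<not> thesis"
  then have "\<not> (\<exists>c. \<forall>x\<in>opdom G. norm x \<le> c * norm (opfun G x))"
    using that by blast
  then obtain z where z: "\<And>n. z n \<in> opdom (opmult A G)" "\<And>n. norm (z n) = 1"
    "(\<lambda>n. opfun (opmult A G) (z n)) \<longlonglongrightarrow> 0" "(\<lambda>n. opfun G (z n)) \<longlonglongrightarrow> 0"
    using approximate_kernel_AG_if_G_not_bounded_below[OF assms(1)] by blast
  have "(\<lambda>n. kform A G lam0 (z n) (z n)) \<longlonglongrightarrow> 0"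
    using z by (intro kform_tendsto_zero[OF assms(2,3)]) auto
  then have "0 \<notin> sigma_pp A G lam0 \<union> sigma_mm A G lam0"
    using z by (intro neutral_approximate_eigenvalue_notin_sigma_pp_sigma_mm) auto
  then show False
    using assms(4) by blast
qed

end

theorem corollaryc:
  fixes A G :: "'a::complex_hilbert lop" and lam0 :: complex
  assumes "selfadjoint A" and "selfadjoint G"
    and "resolvent_set (opmult A G) \<noteq> {}" and "resolvent_set (opmult G A) \<noteq> {}"
    and "Im lam0 \<noteq> 0"
    and "lam0 \<in> resolvent_set (opmult A G)" and "cnj lam0 \<in> resolvent_set (opmult A G)"
    and "0 \<in> sigma_pp A G lam0 \<union> sigma_mm A G lam0"
  shows "0 \<in> resolvent_set G"
proof -
  interpret selfadjoint_pair A G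
    using assms(1,2) by (simp add: selfadjoint_pair_def selfadjoint_operator_def)
  obtain c where "\<And>x. x \<in> opdom G \<Longrightarrow> norm x \<le> c * norm (opfun G x)"
    using G_bounded_below[OF assms(4,6,7,8)] by blast
  then show ?thesis
    by (rule G.bounded_below_imp_zero_in_resolvent_set)
qed

end
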